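(* Let $d$ be a prime and $(p_{nm})_{n,m\in\mathbb{Z}_d}$ a probability distribution on $\mathbb{Z}_d\times\mathbb{Z}_d$. Consider the $d+1$ lines through the origin $\{(0,k):k\in\mathbb{Z}_d\}$ and $\{(k,ak):k\in\mathbb{Z}_d\}$ for $a\in\mathbb{Z}_d$, and let $L_1,\dots,L_{d+1}$ be the sums of $p_{nm}$ over these lines. If $p_{00}>1/d$, then $L_{\max}:=\max\{L_1,\dots,L_{d+1}\}>\frac{2}{d+1}$.
   Context: The $p_{nm}$ are Bell-diagonal probabilities of a two-qudit state; the $d+1$ lines correspond to the $d+1$ mutually unbiased bases, and $L_i$ is the weight associated with the $i$-th one. *)

theory Defs
  imports Complex_Main "HOL-Computational_Algebra.Primes"
begin

text \<open>Z_d is represented by {0..<d} with arithmetic mod d.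
  Lines through the origin in Z_d x Z_d: the vertical line {(0,k)} and,
  for each slope a, the line {(k, a k mod d)}.\<close>

definition vline :: "nat \<Rightarrow> (nat \<times> nat) set" where
  "vline d = {(0, k) | k. k < d}"

definition sline :: "nat \<Rightarrow> nat \<Rightarrow> (nat \<times> nat) set" where
  "sline d a = {(k, (a * k) mod d) | k. k < d}"

definition mub_line :: "nat \<Rightarrow> nat \<Rightarrow> (nat \<times> nat) set" where
  "mub_line d i = (if i < d then sline d i else vline d)"

definition line_weight :: "nat \<Rightarrow> (nat \<Rightarrow> nat \<Rightarrow> real) \<Rightarrow> nat \<Rightarrow> real" where
  "line_weight d p i = (\<Sum>(n, m)\<in>mub_line d i. p n m)"

definition L_max :: "nat \<Rightarrow> (nat \<Rightarrow> nat \<Rightarrow> real) \<Rightarrow> real" where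
  "L_max d p = Max (line_weight d p ` {0..d})"

end

theory Submission
  imports Defs "HOL-Number_Theory.Cong"
begin

text \<open>The origin lies on all \<open>d + 1\<close> lines and every other point of \<open>\<int>\<^sub>d \<times> \<int>\<^sub>d\<close> on at
  least one of them (for prime \<open>d\<close> the point \<open>(n, m)\<close> with \<open>n \<noteq> 0\<close> lies on the line of slope
  \<open>m / n\<close>). Summing the line weights therefore counts the total mass once and \<open>p\<^sub>0\<^sub>0\<close> a further
  \<open>d\<close> times, so \<open>\<Sum> L\<^sub>i \<ge> 1 + d p\<^sub>0\<^sub>0 > 2\<close>, and the largest of the \<open>d + 1\<close> weights exceeds
  \<open>2 / (d + 1)\<close>.\<close>

lemma sum_sum_eq_sum_multiplicity:
  fixes q :: "'a \<Rightarrow> 'b::comm_semiring_1"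
  assumes "finite I" "finite G" "\<And>i. i \<in> I \<Longrightarrow> A i \<subseteq> G"
  shows "(\<Sum>i\<in>I. \<Sum>x\<in>A i. q x) = (\<Sum>x\<in>G. of_nat (card {i\<in>I. x \<in> A i}) * q x)"
proof -
  have "(\<Sum>i\<in>I. \<Sum>x\<in>A i. q x) = (\<Sum>i\<in>I. \<Sum>x\<in>{x\<in>G. x \<in> A i}. q x)"
    using assms(3) by (intro sum.cong) auto
  also have "\<dots> = (\<Sum>x\<in>G. \<Sum>i\<in>{i\<in>I. x \<in> A i}. q x)"
    using assms(1,2) by (rule sum.swap_restrict)
  finally show ?thesis by simp
qed

lemma sum_sum_cover_ge:
  fixes q :: "'a \<Rightarrow> 'b::linordered_idom"
  assumes "finite I" "finite G" "\<And>i. i \<in> I \<Longrightarrow> A i \<subseteq> G"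
    and nonneg: "\<And>x. x \<in> G \<Longrightarrow> q x \<ge> 0"
    and cover: "\<And>x. x \<in> G \<Longrightarrow> \<exists>i\<in>I. x \<in> A i"
    and "x\<^sub>0 \<in> G" and on_all: "\<And>i. i \<in> I \<Longrightarrow> x\<^sub>0 \<in> A i"
  shows "(\<Sum>x\<in>G. q x) + (of_nat (card I) - 1) * q x\<^sub>0 \<le> (\<Sum>i\<in>I. \<Sum>x\<in>A i. q x)"
proof -
  define k where "k x = of_nat (card {i\<in>I. x \<in> A i}) * q x" for x
  have "q x \<le> k x" if "x \<in> G" for x
  proof -
    obtain i where "i \<in> I" "x \<in> A i" using cover[OF \<open>x \<in> G\<close>] by blast
    then have "0 < card {i\<in>I. x \<in> A i}"
      using \<open>finite I\<close> by (auto simp: card_gt_0_iff)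
    then have "(1::'b) \<le> of_nat (card {i\<in>I. x \<in> A i})"
      by simp
    from mult_right_mono[OF this nonneg[OF that]] show ?thesis
      unfolding k_def by simp
  qed
  then have "(\<Sum>x\<in>G - {x\<^sub>0}. q x) \<le> (\<Sum>x\<in>G - {x\<^sub>0}. k x)"
    by (intro sum_mono) auto
  moreover have "{i\<in>I. x\<^sub>0 \<in> A i} = I"
    using on_all by auto
  ultimately have "(\<Sum>x\<in>G. q x) + (of_nat (card I) - 1) * q x\<^sub>0 \<le> (\<Sum>x\<in>G. k x)"
    using \<open>finite G\<close> \<open>x\<^sub>0 \<in> G\<close> by (simp add: k_def sum.remove algebra_simps)
  also have "\<dots> = (\<Sum>i\<in>I. \<Sum>x\<in>A i. q x)"
    using assms(1-3) by (simp add: k_def sum_sum_eq_sum_multiplicity)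
  finally show ?thesis .
qed

lemma mub_line_subset: "mub_line d i \<subseteq> {..<d} \<times> {..<d}"
  by (auto simp: mub_line_def sline_def vline_def)

lemma zero_mem_mub_line: "0 < d \<Longrightarrow> (0, 0) \<in> mub_line d i"
  by (auto simp: mub_line_def sline_def vline_def)

lemma mub_lines_cover:
  assumes "prime d" "n < d" "m < d"
  shows "\<exists>i\<le>d. (n, m) \<in> mub_line d i"
proof (cases "n = 0")
  case True
  then show ?thesis using assms by (intro exI[of _ d]) (auto simp: mub_line_def vline_def)
next
  case False
  have "coprime n d"
    using assms False by (metis prime_imp_coprime_nat coprime_commute dvd_imp_le neq0_conv not_le)
  then obtain x where x: "[n * x = m] (mod d)" using cong_solve_dvd_nat by fastforce
  define a where "a = x mod d"
  have "(a * n) mod d = m"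
    using x \<open>m < d\<close> unfolding a_def cong_def by (simp add: mod_mult_right_eq mult.commute)
  then have "(n, m) \<in> sline d a" using \<open>n < d\<close> unfolding sline_def by auto
  moreover have "a < d" using assms(1) prime_gt_0_nat a_def by auto
  ultimately show ?thesis by (intro exI[of _ a]) (auto simp: mub_line_def)
qed

theorem lemma5:
  fixes d :: nat and p :: "nat \<Rightarrow> nat \<Rightarrow> real"
  assumes "prime d"
    and "\<And>n m. n < d \<Longrightarrow> m < d \<Longrightarrow> p n m \<ge> 0"
    and "(\<Sum>n<d. \<Sum>m<d. p n m) = 1"
    and "p 0 0 > 1 / real d"
  shows "L_max d p > 2 / (real d + 1)"
proof -
  have "d > 0" using assms(1) prime_gt_0_nat by blast
  let ?G = "{..<d} \<times> {..<d}"
  have "(\<Sum>(n, m)\<in>?G. p n m) + (of_nat (card {0..d}) - 1) * p 0 0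
      \<le> (\<Sum>i\<in>{0..d}. \<Sum>(n, m)\<in>mub_line d i. p n m)"
    by (rule sum_sum_cover_ge[of _ ?G _ "case_prod p" "(0, 0)", simplified])
      (use assms(1,2) \<open>d > 0\<close> mub_line_subset zero_mem_mub_line mub_lines_cover in \<open>auto simp: Bex_def\<close>)
  then have "1 + real d * p 0 0 \<le> (\<Sum>i\<in>{0..d}. line_weight d p i)"
    using assms(3) by (simp add: line_weight_def sum.cartesian_product)
  also have "\<dots> \<le> (real d + 1) * L_max d p"
    using sum_bounded_above[of "{0..d}" "line_weight d p" "L_max d p"]
    by (simp add: L_max_def add.commute)
  finally have "2 < (real d + 1) * L_max d p"
    using assms(4) \<open>d > 0\<close> by (simp add: field_simps)
  then show ?thesis by (simp add: field_simps add_pos_pos)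
qed

end
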